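(* Let $\Psi$ be a declarative context and $A$ a type with $\Psi \vdash A\ \mathsf{type}$. Then for each polarity $\pm \in \{+,-\}$ we have $\Psi \vdash A \le^{\pm} A$.
   Context: Sorts are $\kappa \in \{\mathsf{type}, \mathbb{N}\}$. Index terms/monotypes $\tau, t$ are built from $\mathbf{1}$, universal variables $\alpha$, binary connectives $\tau_1 \oplus \tau_2$ with $\oplus \in \{\to, +, \times\}$ (all of sort $\mathsf{type}$), and $\mathsf{zero}$, $\mathsf{succ}(t)$ (of sort $\mathbb{N}$); $\Psi \vdash t : \kappa$ means $t$ has sort $\kappa$ with its variables declared in $\Psi$ at the appropriate sorts. Types are $A, B, C ::= \mathbf{1} \mid \alpha \mid A \oplus B \mid \forall \alpha{:}\kappa.\,A \mid \exists \alpha{:}\kappa.\,A \mid P \supset A \mid A \wedge P \mid \mathsf{Vec}\ t\ A$, where propositions are $P ::= t = t'$ (indices of sort $\mathbb{N}$). A declarative context $\Psi$ is a list of declarations including universal variables $\alpha : \kappa$; $\Psi \vdash A\ \mathsf{type}$ means all free variables of $A$ are declared in $\Psi$ at the appropriate sorts. A type is positive if its head connective is $\exists$, negative if its head connective is $\forall$; "nonpos" means not positive and "nonneg" means not negative. Declarative subtyping $\Psi \vdash A \le^{\pm} B$ (polarity $+$ or $-$) is inductively defined by: (Refl) if $\Psi \vdash A\ \mathsf{type}$ and $A$ is nonpos and nonneg then $\Psi \vdash A \le^{\pm} A$ for either polarity; ($\forall$L) if $\Psi \vdash \tau : \kappa$ and $\Psi \vdash [\tau/\alpha]A \le^- B$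 then $\Psi \vdash \forall\alpha{:}\kappa.A \le^- B$; ($\forall$R) if $\Psi, \beta{:}\kappa \vdash A \le^- B$ then $\Psi \vdash A \le^- \forall\beta{:}\kappa.B$; ($\exists$L) if $\Psi, \alpha{:}\kappa \vdash A \le^+ B$ then $\Psi \vdash \exists\alpha{:}\kappa.A \le^+ B$; ($\exists$R) if $\Psi \vdash \tau:\kappa$ and $\Psi \vdash A \le^+ [\tau/\beta]B$ then $\Psi \vdash A \le^+ \exists\beta{:}\kappa.B$; ($-{+}$) if $\Psi \vdash A \le^- B$ with $A$, $B$ both nonpos then $\Psi \vdash A \le^+ B$; ($+{-}$) if $\Psi \vdash A \le^+ B$ with $A$, $B$ both nonneg then $\Psi \vdash A \le^- B$. *)

theory Defs
  imports Main
begin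

text \<open>Syntax of the declarative system, using de Bruijn indices for universal
variables. Index 0 refers to the most recently declared variable, i.e. the head
of the context list. Index terms/monotypes and types share one datatype; the
sorting and well-formedness judgments single out the relevant fragments.\<close>

datatype sort = SType | SNat

datatype binop = Arrow | Plus | Times

datatype ty =
    Unit
  | Var nat
  | Bin binop ty ty
  | Zero
  | Succ ty
  | All sort ty
  | Ex sort ty
  | Imp iprop ty
  | AndP ty iprop
  | Vec ty ty
and iprop = PEq ty ty

type_synonym ctx = "sort list"

primrec lift :: "nat \<Rightarrow> ty \<Rightarrow> ty" and liftp :: "nat \<Rightarrow> iprop \<Rightarrow> iprop" where
  "lift k Unit = Unit"
| "lift k (Var n) = (if n < k then Var n else Var (Suc n))"
| "lift k (Bin b A B) = Bin b (lift k A) (lift k B)"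
| "lift k Zero = Zero"
| "lift k (Succ t) = Succ (lift k t)"
| "lift k (All \<kappa> A) = All \<kappa> (lift (Suc k) A)"
| "lift k (Ex \<kappa> A) = Ex \<kappa> (lift (Suc k) A)"
| "lift k (Imp P A) = Imp (liftp k P) (lift k A)"
| "lift k (AndP A P) = AndP (lift k A) (liftp k P)"
| "lift k (Vec t A) = Vec (lift k t) (lift k A)"
| "liftp k (PEq t t') = PEq (lift k t) (lift k t')"

text \<open>subst k u A replaces variable k by u and lowers the variables above k
(capture-avoiding substitution in de Bruijn form). [\<tau>/\<alpha>]A for the body A of a
binder is subst 0 \<tau> A.\<close>
primrec subst :: "nat \<Rightarrow> ty \<Rightarrow> ty \<Rightarrow> ty" and substp :: "nat \<Rightarrow> ty \<Rightarrow> iprop \<Rightarrow> iprop" where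
  "subst k u Unit = Unit"
| "subst k u (Var n) = (if n < k then Var n else if n = k then u else Var (n - 1))"
| "subst k u (Bin b A B) = Bin b (subst k u A) (subst k u B)"
| "subst k u Zero = Zero"
| "subst k u (Succ t) = Succ (subst k u t)"
| "subst k u (All \<kappa> A) = All \<kappa> (subst (Suc k) (lift 0 u) A)"
| "subst k u (Ex \<kappa> A) = Ex \<kappa> (subst (Suc k) (lift 0 u) A)"
| "subst k u (Imp P A) = Imp (substp k u P) (subst k u A)"
| "subst k u (AndP A P) = AndP (subst k u A) (substp k u P)"
| "subst k u (Vec t A) = Vec (subst k u t) (subst k u A)"
| "substp k u (PEq t t') = PEq (subst k u t) (subst k u t')"

inductive has_sort :: "ctx \<Rightarrow> ty \<Rightarrow> sort \<Rightarrow> bool" where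
  srt_unit: "has_sort \<Psi> Unit SType"
| srt_var: "n < length \<Psi> \<Longrightarrow> has_sort \<Psi> (Var n) (\<Psi> ! n)"
| srt_bin: "has_sort \<Psi> t1 SType \<Longrightarrow> has_sort \<Psi> t2 SType \<Longrightarrow> has_sort \<Psi> (Bin b t1 t2) SType"
| srt_zero: "has_sort \<Psi> Zero SNat"
| srt_succ: "has_sort \<Psi> t SNat \<Longrightarrow> has_sort \<Psi> (Succ t) SNat"

definition wf_prop :: "ctx \<Rightarrow> iprop \<Rightarrow> bool" where
  "wf_prop \<Psi> P = (case P of PEq t t' \<Rightarrow> has_sort \<Psi> t SNat \<and> has_sort \<Psi> t' SNat)"

inductive wf_type :: "ctx \<Rightarrow> ty \<Rightarrow> bool" where
  wf_unit: "wf_type \<Psi> Unit"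
| wf_var: "n < length \<Psi> \<Longrightarrow> \<Psi> ! n = SType \<Longrightarrow> wf_type \<Psi> (Var n)"
| wf_bin: "wf_type \<Psi> A \<Longrightarrow> wf_type \<Psi> B \<Longrightarrow> wf_type \<Psi> (Bin b A B)"
| wf_all: "wf_type (\<kappa> # \<Psi>) A \<Longrightarrow> wf_type \<Psi> (All \<kappa> A)"
| wf_ex: "wf_type (\<kappa> # \<Psi>) A \<Longrightarrow> wf_type \<Psi> (Ex \<kappa> A)"
| wf_imp: "wf_prop \<Psi> P \<Longrightarrow> wf_type \<Psi> A \<Longrightarrow> wf_type \<Psi> (Imp P A)"
| wf_with: "wf_type \<Psi> A \<Longrightarrow> wf_prop \<Psi> P \<Longrightarrow> wf_type \<Psi> (AndP A P)"
| wf_vec: "has_sort \<Psi> t SNat \<Longrightarrow> wf_type \<Psi> A \<Longrightarrow> wf_type \<Psi> (Vec t A)"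

definition positive :: "ty \<Rightarrow> bool" where
  "positive A = (case A of Ex _ _ \<Rightarrow> True | _ \<Rightarrow> False)"

definition negative :: "ty \<Rightarrow> bool" where
  "negative A = (case A of All _ _ \<Rightarrow> True | _ \<Rightarrow> False)"

abbreviation nonpos :: "ty \<Rightarrow> bool" where "nonpos A \<equiv> \<not> positive A"
abbreviation nonneg :: "ty \<Rightarrow> bool" where "nonneg A \<equiv> \<not> negative A"

datatype polarity = PPos | PNeg

text \<open>Declarative subtyping \<Psi> \<turnstile> A \<le>^p B. Extending the context with a fresh
variable (\<Psi>, \<beta>:\<kappa>) requires lifting the types that live in \<Psi>.\<close>
inductive subtype :: "ctx \<Rightarrow> polarity \<Rightarrow> ty \<Rightarrow> ty \<Rightarrow> bool" where
  sub_refl: "wf_type \<Psi> A \<Longrightarrow> nonpos A \<Longrightarrow> nonneg A \<Longrightarrow> subtype \<Psi> p A A"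
| sub_allL: "has_sort \<Psi> \<tau> \<kappa> \<Longrightarrow> subtype \<Psi> PNeg (subst 0 \<tau> A) B
      \<Longrightarrow> subtype \<Psi> PNeg (All \<kappa> A) B"
| sub_allR: "subtype (\<kappa> # \<Psi>) PNeg (lift 0 A) B \<Longrightarrow> subtype \<Psi> PNeg A (All \<kappa> B)"
| sub_exL: "subtype (\<kappa> # \<Psi>) PPos A (lift 0 B) \<Longrightarrow> subtype \<Psi> PPos (Ex \<kappa> A) B"
| sub_exR: "has_sort \<Psi> \<tau> \<kappa> \<Longrightarrow> subtype \<Psi> PPos A (subst 0 \<tau> B)
      \<Longrightarrow> subtype \<Psi> PPos A (Ex \<kappa> B)"
| sub_negpos: "subtype \<Psi> PNeg A B \<Longrightarrow> nonpos A \<Longrightarrow> nonpos B \<Longrightarrow> subtype \<Psi> PPos A B"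
| sub_posneg: "subtype \<Psi> PPos A B \<Longrightarrow> nonneg A \<Longrightarrow> nonneg B \<Longrightarrow> subtype \<Psi> PNeg A B"

end

theory Submission
  imports Defs
begin

text \<open>Quantifier-free types are covered by
Refl. For \<open>\<forall>\<alpha>:\<kappa>. A\<close>, apply \<open>\<forall>\<close>R to introduce a fresh \<open>\<beta>:\<kappa>\<close> and then \<open>\<forall>\<close>L instantiating
\<open>\<alpha>\<close> by \<open>\<beta>\<close>, which reduces the goal to \<open>A \<le>\<^sup>- A\<close>; dually for \<open>\<exists>\<close>. A universal type is
nonpositive, so the rule \<open>-+\<close> then also yields the positive judgement (dually \<open>+-\<close>).\<close>

lemma subst_lift_id:
  "subst k (Var k) (lift (Suc k) A) = A"
  "substp k (Var k) (liftp (Suc k) P) = P"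
  by (induction A and P arbitrary: k and k) auto

lemma has_sort_Var_0: "has_sort (\<kappa> # \<Psi>) (Var 0) \<kappa>"
  using srt_var[of 0 "\<kappa> # \<Psi>"] by simp

lemma subtype_All_self:
  assumes "subtype (\<kappa> # \<Psi>) PNeg A A"
  shows "subtype \<Psi> PNeg (All \<kappa> A) (All \<kappa> A)"
proof (rule sub_allR)
  show "subtype (\<kappa> # \<Psi>) PNeg (lift 0 (All \<kappa> A)) A"
    using sub_allL[OF has_sort_Var_0, of \<kappa> \<Psi> "lift 1 A" A] assms
    by (simp add: subst_lift_id)
qed

lemma subtype_Ex_self:
  assumes "subtype (\<kappa> # \<Psi>) PPos A A"
  shows "subtype \<Psi> PPos (Ex \<kappa> A) (Ex \<kappa> A)"
proof (rule sub_exL)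
  show "subtype (\<kappa> # \<Psi>) PPos A (lift 0 (Ex \<kappa> A))"
    using sub_exR[OF has_sort_Var_0, of \<kappa> \<Psi> A "lift 1 A"] assms
    by (simp add: subst_lift_id)
qed

lemma subtype_self_PNeg_any:
  assumes "subtype \<Psi> PNeg A A" and "nonpos A"
  shows "subtype \<Psi> p A A"
  using assms by (cases p) (auto intro: sub_negpos)

lemma subtype_self_PPos_any:
  assumes "subtype \<Psi> PPos A A" and "nonneg A"
  shows "subtype \<Psi> p A A"
  using assms by (cases p) (auto intro: sub_posneg)

theorem mainTheorem1:
  assumes "wf_type \<Psi> A"
  shows "subtype \<Psi> p A A"
  using assms
proof (induction arbitrary: p rule: wf_type.induct)
  case (wf_all \<kappa> \<Psi> A)
  show ?case
    by (rule subtype_self_PNeg_any[OF subtype_All_self[OF wf_all.IH]])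
       (simp add: positive_def)
next
  case (wf_ex \<kappa> \<Psi> A)
  show ?case
    by (rule subtype_self_PPos_any[OF subtype_Ex_self[OF wf_ex.IH]])
       (simp add: negative_def)
qed (auto intro!: sub_refl wf_type.intros simp: positive_def negative_def)

end
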